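(* Let $K$ be a partition of a metric space $(Y,\rho)$ parametrized by a tree with a reference point $(T,\pi,\phi)$ and satisfying the basic framework with constants $\zeta\in(0,1)$ and $\xi>0$. Then there exist $\xi'>0$ and points $\{y_w\}_{w\in T}$ with $y_w\in K_w$ and $B_\rho(y_w,\xi'\zeta^{[w]})\subset K_w$ for all $w\in T$, such that $\bigcup_{w\in T_n}\{y_w\}\subset\bigcup_{w\in T_m}\{y_w\}$ whenever $n\le m$.
   Context: Trees and partitions: a tree with a reference point $(T,\pi,\phi)$ is a countable set $T$ with a map $\pi:T\to T$ such that $F_\pi=\{w:\pi^n(w)=w$ for some $n\ge1\}$ has at most one element, and for all $w,v$ there are $n,m\ge0$ with $\pi^n(w)=\pi^m(v)$; $\phi\in F_\pi$ if $F_\pi\neq\emptyset$, otherwise $\phi$ is a fixed element. Let $b(w,v)=\min\{n\ge0:\pi^n(w)=\pi^m(v)$ for some $m\ge0\}$, $[w]=b(w,\phi)-b(\phi,w)$, $T_n=\{w:[w]=n\}$ ($n\in\mathbb Z$), and $\acute\pi^{-k}(w)=\pi^{-k}(w)\cap T_{[w]+k}$. A partition of a metric space $(Y,\rho)$ parametrized by $(T,\pi,\phi)$ is a map $w\mapsto K_w\subset Y$ with: each $K_w$ compact, nonempty and not a single point; $\bigcup_{w\in T_0}K_w=Y$; $\bigcup_{v\in\acute\pi^{-1}(w)}K_v=K_w$ for all $w$; and $\bigcap_{k\in\mathbb Z}K_{w_k}$ is a single point whenever $(w_k)_{k\in\mathbb Z}$ satisfies $\pi(w_{k+1})=w_k$.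 Let $E_n=\{(w,v)\in T_n\times T_n:K_w\cap K_v\ne\emptyset,w\ne v\}$ and $l_n$ the graph distance on $(T_n,E_n)$ (possibly $\infty$). $K$ satisfies the basic framework if $\sup_w\#\acute\pi^{-1}(w)<\infty$ and: interiors of distinct $K_w,K_v$ with $[w]=[v]$ are disjoint; there is $\zeta\in(0,1)$ with $\mathrm{diam}_\rho(K_w)\asymp\zeta^{[w]}$; there is $\xi>0$ such that for each $w$ there is $x_w\in K_w$ with $B_\rho(x_w,\xi\zeta^{[w]})\subset K_w$; there is $M_*\in\mathbb N$ with $\rho(x,y)\asymp\zeta^{\Delta_{M_*}(x,y)}$, where $\Delta_m(x,y)=\sup\{n:x\in K_w,y\in K_v,l_n(w,v)\le m$ for some $w,v\in T_n\}$; and $L_*=\sup_w\#\{v:(w,v)\in E_{[w]}\}<\infty$. *)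

theory Defs
  imports "HOL-Analysis.Analysis"
begin

definition periodic_pts :: "'w set \<Rightarrow> ('w \<Rightarrow> 'w) \<Rightarrow> 'w set" where
  "periodic_pts T \<pi> = {w \<in> T. \<exists>n\<ge>1. (\<pi> ^^ n) w = w}"

definition tree_ref :: "'w set \<Rightarrow> ('w \<Rightarrow> 'w) \<Rightarrow> 'w \<Rightarrow> bool" where
  "tree_ref T \<pi> \<phi> \<longleftrightarrow>
     countable T \<and> (\<forall>w\<in>T. \<pi> w \<in> T) \<and>
     (\<forall>a\<in>periodic_pts T \<pi>. \<forall>b\<in>periodic_pts T \<pi>. a = b) \<and>
     (\<forall>w\<in>T. \<forall>v\<in>T. \<exists>n m. (\<pi> ^^ n) w = (\<pi> ^^ m) v) \<and>
     \<phi> \<in> T \<and> (periodic_pts T \<pi> \<noteq> {} \<longrightarrow> \<phi> \<in> periodic_pts T \<pi>)"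

definition bfun :: "('w \<Rightarrow> 'w) \<Rightarrow> 'w \<Rightarrow> 'w \<Rightarrow> nat" where
  "bfun \<pi> w v = (LEAST n. \<exists>m. (\<pi> ^^ n) w = (\<pi> ^^ m) v)"

definition level :: "('w \<Rightarrow> 'w) \<Rightarrow> 'w \<Rightarrow> 'w \<Rightarrow> int" where
  "level \<pi> \<phi> w = int (bfun \<pi> w \<phi>) - int (bfun \<pi> \<phi> w)"

definition Tlev :: "'w set \<Rightarrow> ('w \<Rightarrow> 'w) \<Rightarrow> 'w \<Rightarrow> int \<Rightarrow> 'w set" where
  "Tlev T \<pi> \<phi> n = {w \<in> T. level \<pi> \<phi> w = n}"

definition children :: "'w set \<Rightarrow> ('w \<Rightarrow> 'w) \<Rightarrow> 'w \<Rightarrow> 'w \<Rightarrow> 'w set" where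
  "children T \<pi> \<phi> w = {v \<in> T. \<pi> v = w \<and> level \<pi> \<phi> v = level \<pi> \<phi> w + 1}"

section \<open>Partitions (the metric space Y is the whole type 'a)\<close>

definition is_partition ::
  "'w set \<Rightarrow> ('w \<Rightarrow> 'w) \<Rightarrow> 'w \<Rightarrow> ('w \<Rightarrow> 'a::metric_space set) \<Rightarrow> bool" where
  "is_partition T \<pi> \<phi> K \<longleftrightarrow>
     (\<forall>w\<in>T. compact (K w) \<and> K w \<noteq> {} \<and> \<not> (\<exists>x. K w = {x})) \<and>
     (\<Union>w\<in>Tlev T \<pi> \<phi> 0. K w) = UNIV \<and>
     (\<forall>w\<in>T. (\<Union>v\<in>children T \<pi> \<phi> w. K v) = K w) \<and>
     (\<forall>ws :: int \<Rightarrow> 'w. (\<forall>k. ws k \<in> T \<and> \<pi> (ws (k + 1)) = ws k) \<longrightarrow>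
        (\<exists>x. (\<Inter>k. K (ws k)) = {x}))"

definition Eset :: "'w set \<Rightarrow> ('w \<Rightarrow> 'w) \<Rightarrow> 'w \<Rightarrow> ('w \<Rightarrow> 'a set) \<Rightarrow> int \<Rightarrow> ('w \<times> 'w) set" where
  "Eset T \<pi> \<phi> K n = {(w, v). w \<in> Tlev T \<pi> \<phi> n \<and> v \<in> Tlev T \<pi> \<phi> n \<and> K w \<inter> K v \<noteq> {} \<and> w \<noteq> v}"

definition gdist :: "'w set \<Rightarrow> ('w \<Rightarrow> 'w) \<Rightarrow> 'w \<Rightarrow> ('w \<Rightarrow> 'a set) \<Rightarrow> int \<Rightarrow> 'w \<Rightarrow> 'w \<Rightarrow> enat" where
  "gdist T \<pi> \<phi> K n w v = (INF k \<in> {k. (w, v) \<in> Eset T \<pi> \<phi> K n ^^ k}. enat k)"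

text \<open>Delta_m(x,y), valued in the extended reals (sup of the empty set is -infinity)\<close>
definition Delta :: "'w set \<Rightarrow> ('w \<Rightarrow> 'w) \<Rightarrow> 'w \<Rightarrow> ('w \<Rightarrow> 'a set) \<Rightarrow> nat \<Rightarrow> 'a \<Rightarrow> 'a \<Rightarrow> ereal" where
  "Delta T \<pi> \<phi> K m x y = Sup {ereal (real_of_int n) | n. \<exists>w\<in>Tlev T \<pi> \<phi> n. \<exists>v\<in>Tlev T \<pi> \<phi> n.
        x \<in> K w \<and> y \<in> K v \<and> gdist T \<pi> \<phi> K n w v \<le> enat m}"

definition epow :: "real \<Rightarrow> ereal \<Rightarrow> ereal" where
  "epow z D = (case D of ereal r \<Rightarrow> ereal (z powr r) | PInfty \<Rightarrow> 0 | MInfty \<Rightarrow> PInfty)"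

definition basic_framework ::
  "'w set \<Rightarrow> ('w \<Rightarrow> 'w) \<Rightarrow> 'w \<Rightarrow> ('w \<Rightarrow> 'a::metric_space set) \<Rightarrow> real \<Rightarrow> real \<Rightarrow> bool" where
  "basic_framework T \<pi> \<phi> K \<zeta> \<xi> \<longleftrightarrow>
     (\<exists>N::nat. \<forall>w\<in>T. finite (children T \<pi> \<phi> w) \<and> card (children T \<pi> \<phi> w) \<le> N) \<and>
     (\<forall>w\<in>T. \<forall>v\<in>T. w \<noteq> v \<and> level \<pi> \<phi> w = level \<pi> \<phi> v \<longrightarrow>
        interior (K w) \<inter> interior (K v) = {}) \<and>
     0 < \<zeta> \<and> \<zeta> < 1 \<and>
     (\<exists>c1 c2. 0 < c1 \<and> 0 < c2 \<and> (\<forall>w\<in>T.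
        c1 * \<zeta> powr (real_of_int (level \<pi> \<phi> w)) \<le> diameter (K w) \<and>
        diameter (K w) \<le> c2 * \<zeta> powr (real_of_int (level \<pi> \<phi> w)))) \<and>
     0 < \<xi> \<and>
     (\<forall>w\<in>T. \<exists>x\<in>K w. ball x (\<xi> * \<zeta> powr (real_of_int (level \<pi> \<phi> w))) \<subseteq> K w) \<and>
     (\<exists>M::nat. 1 \<le> M \<and> (\<exists>c1 c2. 0 < c1 \<and> 0 < c2 \<and> (\<forall>x y.
        ereal c1 * epow \<zeta> (Delta T \<pi> \<phi> K M x y) \<le> ereal (dist x y) \<and>
        ereal (dist x y) \<le> ereal c2 * epow \<zeta> (Delta T \<pi> \<phi> K M x y)))) \<and>
     (\<exists>L::nat. \<forall>w\<in>T. finite {v. (w, v) \<in> Eset T \<pi> \<phi> K (level \<pi> \<phi> w)} \<and>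
        card {v. (w, v) \<in> Eset T \<pi> \<phi> K (level \<pi> \<phi> w)} \<le> L)"

end

theory Submission
  imports Defs
begin

text \<open>
  Fix \<open>j\<close> with \<open>c\<zeta>^j \<le> \<xi>/2\<close>, where \<open>diam K\<^sub>w \<le> c\<zeta>^[w]\<close>, and let \<open>x\<^sub>w\<close> be the centre of a ball of radius
  \<open>\<xi>\<zeta>^[w]\<close> inside \<open>K\<^sub>w\<close>. Choose for every cell one child, in such a way that below a cell \<open>w\<close>
  whose level is a multiple of \<open>j\<close> the chosen children keep containing \<open>x\<^sub>w\<close> for \<open>j\<close> generations.
  Following chosen children from any cell gives a nested sequence of compact sets; let \<open>y\<^sub>w\<close> be a
  point of its intersection. Then \<open>y\<close> is constant along chosen children, which yields the inclusion
  of the level sets of points. Less than \<open>j\<close> chosen generations below any \<open>v\<close> lies such a \<open>w\<close>, and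
  \<open>y\<^sub>v = y\<^sub>w\<close> and \<open>x\<^sub>w\<close> lie in a common cell \<open>j\<close> generations below \<open>w\<close>, whose diameter is at most
  \<open>\<xi>\<zeta>^[w]/2\<close>; so a ball of radius \<open>\<xi>\<zeta>^(j+[v])/2\<close> around \<open>y\<^sub>v\<close> lies in \<open>K\<^sub>w \<subseteq> K\<^sub>v\<close>.
\<close>

lemma compact_decseq_Inter_nonempty:
  fixes F :: "nat \<Rightarrow> 'a::t2_space set"
  assumes compact: "\<And>n. compact (F n)" and nonempty: "\<And>n. F n \<noteq> {}" and "decseq F"
  shows "(\<Inter>n. F n) \<noteq> {}"
proof -
  have "F 0 \<inter> (\<Inter>n\<in>UNIV. F n) \<noteq> {}"
  proof (rule compact_imp_fip_image[OF compact])
    show "closed (F n)" for n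
      using compact compact_imp_closed by blast
    fix I :: "nat set"
    assume "finite I" "I \<subseteq> UNIV"
    then have "F (Max (insert 0 I)) \<subseteq> F n" if "n \<in> insert 0 I" for n
      using \<open>decseq F\<close> that by (simp add: decseq_def)
    then show "F 0 \<inter> (\<Inter>n\<in>I. F n) \<noteq> {}"
      using nonempty by blast
  qed
  then show ?thesis
    by blast
qed

lemma Inter_decseq_Suc:
  assumes "decseq F"
  shows "(\<Inter>n. F (Suc n)) = (\<Inter>n. F n)"
proof -
  have "F (Suc 0) \<subseteq> F 0"
    using assms by (simp add: decseq_Suc_iff)
  then have "(\<Inter>n. F (Suc n)) \<subseteq> F n" for n
    by (cases n) auto
  then show ?thesis
    by blast
qed

locale scaled_partition =
  fixes T :: "'w set" and parent :: "'w \<Rightarrow> 'w" and lev :: "'w \<Rightarrow> int"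
    and ch :: "'w \<Rightarrow> 'w set" and K :: "'w \<Rightarrow> 'a::metric_space set"
    and \<zeta> \<xi> c :: real
  assumes child: "\<And>w v. w \<in> T \<Longrightarrow> v \<in> ch w \<Longrightarrow> v \<in> T \<and> parent v = w \<and> lev v = lev w + 1"
    and Union_children: "\<And>w. w \<in> T \<Longrightarrow> (\<Union>v\<in>ch w. K v) = K w"
    and compact_K: "\<And>w. w \<in> T \<Longrightarrow> compact (K w)"
    and K_nonempty: "\<And>w. w \<in> T \<Longrightarrow> K w \<noteq> {}"
    and zeta_pos: "0 < \<zeta>" and zeta_less_1: "\<zeta> < 1" and xi_pos: "0 < \<xi>" and c_pos: "0 < c"
    and diameter_K: "\<And>w. w \<in> T \<Longrightarrow> diameter (K w) \<le> c * \<zeta> powr real_of_int (lev w)"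
    and inner_ball: "\<And>w. w \<in> T \<Longrightarrow> \<exists>x\<in>K w. ball x (\<xi> * \<zeta> powr real_of_int (lev w)) \<subseteq> K w"
begin

definition center :: "'w \<Rightarrow> 'a" where
  "center w = (SOME x. x \<in> K w \<and> ball x (\<xi> * \<zeta> powr real_of_int (lev w)) \<subseteq> K w)"

lemma center_in_K: "w \<in> T \<Longrightarrow> center w \<in> K w"
  and ball_center_subset: "w \<in> T \<Longrightarrow> ball (center w) (\<xi> * \<zeta> powr real_of_int (lev w)) \<subseteq> K w"
  using someI_ex[OF inner_ball[unfolded Bex_def]] by (simp_all add: center_def)

lemma K_child_subset: "w \<in> T \<Longrightarrow> v \<in> ch w \<Longrightarrow> K v \<subseteq> K w"
  using Union_children by blast

end

locale periodic_descent = scaled_partition T parent lev ch K \<zeta> \<xi> c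
  for T :: "'w set" and parent lev ch and K :: "'w \<Rightarrow> 'a::metric_space set" and \<zeta> \<xi> c +
  fixes j :: nat
  assumes period_pos: "0 < j" and period_small: "c * \<zeta> ^ j \<le> \<xi> / 2"
begin

text \<open>Along chosen children below a cell whose level is divisible by \<open>j\<close>, this is that cell.\<close>
definition anchor :: "'w \<Rightarrow> 'w" where
  "anchor u = (parent ^^ nat (lev u mod int j)) u"

definition descend :: "'w \<Rightarrow> 'w" where
  "descend u = (SOME v. v \<in> ch u \<and> (center (anchor u) \<in> K u \<longrightarrow> center (anchor u) \<in> K v))"

definition limit_set :: "'w \<Rightarrow> 'a set" where
  "limit_set v = (\<Inter>k. K ((descend ^^ k) v))"

definition point :: "'w \<Rightarrow> 'a" where
  "point v = (SOME y. y \<in> limit_set v)"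

lemma descend_child: "u \<in> T \<Longrightarrow> descend u \<in> ch u"
  and center_anchor_in_descend:
    "u \<in> T \<Longrightarrow> center (anchor u) \<in> K u \<Longrightarrow> center (anchor u) \<in> K (descend u)"
proof -
  assume "u \<in> T"
  then have "\<exists>v. v \<in> ch u \<and> (center (anchor u) \<in> K u \<longrightarrow> center (anchor u) \<in> K v)"
    using Union_children[of u] K_nonempty[of u] by blast
  from someI_ex[OF this]
  show "descend u \<in> ch u" "center (anchor u) \<in> K u \<Longrightarrow> center (anchor u) \<in> K (descend u)"
    unfolding descend_def by blast+
qed

lemma descend_iter:
  assumes "u \<in> T"
  shows "(descend ^^ k) u \<in> T \<and> lev ((descend ^^ k) u) = lev u + int k
    \<and> (parent ^^ k) ((descend ^^ k) u) = u"
proof (induction k)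
  case 0
  then show ?case
    using assms by simp
next
  case (Suc k)
  define v where "v = (descend ^^ k) u"
  have "v \<in> T" "lev v = lev u + int k" "(parent ^^ k) v = u"
    using Suc by (simp_all add: v_def)
  then have "descend v \<in> T" "parent (descend v) = v" "lev (descend v) = lev u + int (Suc k)"
    using child[OF \<open>v \<in> T\<close> descend_child] by simp_all
  moreover have "(parent ^^ Suc k) (descend v) = (parent ^^ k) (parent (descend v))"
    by (simp only: funpow_Suc_right o_apply)
  moreover have "(descend ^^ Suc k) u = descend v"
    by (simp add: v_def)
  ultimately show ?case
    using \<open>(parent ^^ k) v = u\<close> by simp
qed

lemma decseq_K_descend_iter: "u \<in> T \<Longrightarrow> decseq (\<lambda>k. K ((descend ^^ k) u))"
  unfolding decseq_Suc_iff using descend_iter descend_child K_child_subset by simp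

lemma center_in_descend_iter:
  assumes "u \<in> T" "lev u mod int j = 0" "k \<le> j"
  shows "center u \<in> K ((descend ^^ k) u)"
  using \<open>k \<le> j\<close>
proof (induction k)
  case 0
  then show ?case
    using center_in_K assms by simp
next
  case (Suc k)
  define v where "v = (descend ^^ k) u"
  have "v \<in> T" "lev v = lev u + int k" "(parent ^^ k) v = u"
    using descend_iter[OF \<open>u \<in> T\<close>] by (simp_all add: v_def)
  then have "lev v mod int j = int k"
    using assms(2) Suc.prems by (simp add: mod_add_left_eq[symmetric])
  then have "anchor v = u"
    using \<open>(parent ^^ k) v = u\<close> by (simp add: anchor_def)
  then show ?case
    using center_anchor_in_descend[OF \<open>v \<in> T\<close>] Suc by (simp add: v_def)
qed

lemma limit_set_nonempty:
  assumes "v \<in> T"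
  shows "limit_set v \<noteq> {}"
proof -
  have "(descend ^^ k) v \<in> T" for k
    using descend_iter[OF assms] by blast
  then show ?thesis
    unfolding limit_set_def
    using compact_K K_nonempty decseq_K_descend_iter[OF assms]
    by (intro compact_decseq_Inter_nonempty) blast+
qed

lemma limit_set_descend:
  assumes "v \<in> T"
  shows "limit_set (descend v) = limit_set v"
proof -
  have "(descend ^^ Suc k) v = (descend ^^ k) (descend v)" for k
    by (simp only: funpow_Suc_right o_apply)
  then show ?thesis
    using Inter_decseq_Suc[OF decseq_K_descend_iter[OF assms]]
    by (simp only: limit_set_def)
qed

lemma point_in_K_descend_iter:
  assumes "v \<in> T"
  shows "point v \<in> K ((descend ^^ k) v)"
proof -
  have "point v \<in> limit_set v"
    unfolding point_def using limit_set_nonempty[OF assms] by (simp add: some_in_eq)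
  then show ?thesis
    by (simp add: limit_set_def)
qed

lemma point_in_K: "v \<in> T \<Longrightarrow> point v \<in> K v"
  using point_in_K_descend_iter[of v 0] by simp

lemma point_descend_iter:
  assumes "v \<in> T"
  shows "point ((descend ^^ k) v) = point v"
proof (induction k)
  case (Suc k)
  have "(descend ^^ k) v \<in> T"
    using descend_iter[OF assms] by blast
  then have "point (descend ((descend ^^ k) v)) = point ((descend ^^ k) v)"
    by (simp add: point_def limit_set_descend)
  then show ?case
    using Suc by simp
qed simp

lemma dist_point_center:
  assumes "w \<in> T" "lev w mod int j = 0"
  shows "dist (point w) (center w) \<le> \<xi> / 2 * \<zeta> powr real_of_int (lev w)"
proof -
  define u where "u = (descend ^^ j) w"
  have "u \<in> T" "lev u = lev w + int j"
    using descend_iter[OF \<open>w \<in> T\<close>] by (auto simp: u_def)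
  have "dist (point w) (center w) \<le> diameter (K u)"
    using point_in_K_descend_iter center_in_descend_iter assms compact_K[OF \<open>u \<in> T\<close>]
    by (intro diameter_bounded_bound compact_imp_bounded) (auto simp: u_def)
  also have "\<dots> \<le> c * \<zeta> powr real_of_int (lev u)"
    using diameter_K[OF \<open>u \<in> T\<close>] .
  also have "\<dots> = c * \<zeta> ^ j * \<zeta> powr real_of_int (lev w)"
    using zeta_pos by (simp add: \<open>lev u = lev w + int j\<close> powr_add powr_realpow mult_ac)
  also have "\<dots> \<le> \<xi> / 2 * \<zeta> powr real_of_int (lev w)"
    using mult_right_mono[OF period_small, of "\<zeta> powr real_of_int (lev w)"] by simp
  finally show ?thesis .
qed

lemma ball_point_subset:
  assumes "v \<in> T"
  shows "ball (point v) (\<xi> / 2 * \<zeta> ^ j * \<zeta> powr real_of_int (lev v)) \<subseteq> K v"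
proof -
  define i where "i = nat ((- lev v) mod int j)"
  define w where "w = (descend ^^ i) v"
  have "i < j"
    using period_pos by (simp add: i_def nat_less_iff)
  have "w \<in> T" and lev_w: "lev w = lev v + int i"
    using descend_iter[OF assms] by (auto simp: w_def)
  have "lev w mod int j = 0"
    using period_pos by (simp add: lev_w i_def mod_add_right_eq)
  have "\<xi> / 2 * \<zeta> ^ j * \<zeta> powr real_of_int (lev v) = \<xi> / 2 * \<zeta> powr (real_of_int (lev v) + real j)"
    using zeta_pos by (simp add: powr_add powr_realpow)
  also have "\<dots> \<le> \<xi> / 2 * \<zeta> powr real_of_int (lev w)"
    using xi_pos zeta_pos zeta_less_1 \<open>i < j\<close> lev_w by (intro mult_left_mono powr_mono') auto
  finally have "ball (point v) (\<xi> / 2 * \<zeta> ^ j * \<zeta> powr real_of_int (lev v))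
      \<subseteq> ball (point w) (\<xi> / 2 * \<zeta> powr real_of_int (lev w))"
    using point_descend_iter[OF assms] by (simp add: w_def subset_ball)
  also have "\<dots> \<subseteq> ball (center w) (\<xi> * \<zeta> powr real_of_int (lev w))"
  proof
    fix z
    assume "z \<in> ball (point w) (\<xi> / 2 * \<zeta> powr real_of_int (lev w))"
    then show "z \<in> ball (center w) (\<xi> * \<zeta> powr real_of_int (lev w))"
      using dist_point_center[OF \<open>w \<in> T\<close> \<open>lev w mod int j = 0\<close>]
        dist_triangle[of "center w" z "point w"]
      by (simp add: dist_commute)
  qed
  also have "\<dots> \<subseteq> K w"
    using ball_center_subset[OF \<open>w \<in> T\<close>] .
  also have "\<dots> \<subseteq> K v"
    using decseq_K_descend_iter[OF assms, unfolded decseq_def, rule_format, of 0 i] by (simp add: w_def)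
  finally show ?thesis .
qed

lemma point_image_level_mono:
  assumes "n \<le> m"
  shows "point ` {w \<in> T. lev w = n} \<subseteq> point ` {w \<in> T. lev w = m}"
proof
  fix y
  assume "y \<in> point ` {w \<in> T. lev w = n}"
  then obtain w where "w \<in> T" "lev w = n" "y = point w"
    by blast
  moreover define u where "u = (descend ^^ nat (m - n)) w"
  ultimately have "u \<in> T" "lev u = m" "point u = y"
    using descend_iter point_descend_iter assms by (auto simp: u_def)
  then show "y \<in> point ` {w \<in> T. lev w = m}"
    by blast
qed

end

context scaled_partition
begin

theorem nested_inner_points:
  "\<exists>\<xi>'>0. \<exists>y. (\<forall>w\<in>T. y w \<in> K w \<and> ball (y w) (\<xi>' * \<zeta> powr real_of_int (lev w)) \<subseteq> K w) \<and>
     (\<forall>n m. n \<le> m \<longrightarrow> y ` {w \<in> T. lev w = n} \<subseteq> y ` {w \<in> T. lev w = m})"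
proof -
  obtain k where "\<zeta> ^ k < \<xi> / (2 * c)"
    using real_arch_pow_inv[of "\<xi> / (2 * c)" \<zeta>] zeta_pos zeta_less_1 xi_pos c_pos by auto
  then have "c * \<zeta> ^ k < \<xi> / 2"
    using c_pos by (simp add: less_divide_eq mult_ac)
  moreover have "c * \<zeta> ^ Suc k \<le> c * \<zeta> ^ k"
    using zeta_pos zeta_less_1 c_pos by (intro mult_left_mono power_decreasing) auto
  ultimately have "c * \<zeta> ^ Suc k \<le> \<xi> / 2"
    by linarith
  then interpret periodic_descent T parent lev ch K \<zeta> \<xi> c "Suc k"
    by unfold_locales simp
  show ?thesis
    using xi_pos zeta_pos point_in_K ball_point_subset point_image_level_mono
    by (intro exI[of _ "\<xi> / 2 * \<zeta> ^ Suc k"] exI[of _ point] conjI ballI allI impI) simp_all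
qed

end

lemma scaled_partition_framework:
  assumes "is_partition T \<pi> \<phi> K" "basic_framework T \<pi> \<phi> K \<zeta> \<xi>"
  obtains c where "scaled_partition T \<pi> (level \<pi> \<phi>) (children T \<pi> \<phi>) K \<zeta> \<xi> c"
proof -
  obtain c where "0 < c" "\<forall>w\<in>T. diameter (K w) \<le> c * \<zeta> powr real_of_int (level \<pi> \<phi> w)"
    using assms(2) unfolding basic_framework_def by meson
  moreover have "\<forall>w\<in>T. compact (K w) \<and> K w \<noteq> {}"
    and "\<forall>w\<in>T. (\<Union>v\<in>children T \<pi> \<phi> w. K v) = K w"
    using assms(1) unfolding is_partition_def by blast+
  moreover have "0 < \<zeta>" "\<zeta> < 1" "0 < \<xi>"
    and "\<forall>w\<in>T. \<exists>x\<in>K w. ball x (\<xi> * \<zeta> powr real_of_int (level \<pi> \<phi> w)) \<subseteq> K w"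
    using assms(2) unfolding basic_framework_def by blast+
  ultimately have "scaled_partition T \<pi> (level \<pi> \<phi>) (children T \<pi> \<phi>) K \<zeta> \<xi> c"
    by unfold_locales (auto simp: children_def)
  then show ?thesis
    using that by blast
qed

theorem mainTheorem14:
  fixes T :: "'w set" and \<pi> :: "'w \<Rightarrow> 'w" and \<phi> :: 'w
    and K :: "'w \<Rightarrow> 'a::metric_space set" and \<zeta> \<xi> :: real
  assumes "tree_ref T \<pi> \<phi>"
    and "is_partition T \<pi> \<phi> K"
    and "basic_framework T \<pi> \<phi> K \<zeta> \<xi>"
  shows "\<exists>\<xi>'>0. \<exists>y :: 'w \<Rightarrow> 'a.
           (\<forall>w\<in>T. y w \<in> K w \<and>
              ball (y w) (\<xi>' * \<zeta> powr (real_of_int (level \<pi> \<phi> w))) \<subseteq> K w) \<and>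
           (\<forall>n m. n \<le> m \<longrightarrow> y ` Tlev T \<pi> \<phi> n \<subseteq> y ` Tlev T \<pi> \<phi> m)"
proof -
  obtain c where "scaled_partition T \<pi> (level \<pi> \<phi>) (children T \<pi> \<phi>) K \<zeta> \<xi> c"
    using scaled_partition_framework assms(2,3) .
  then show ?thesis
    unfolding Tlev_def by (rule scaled_partition.nested_inner_points)
qed

end
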